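(* Let $M\ge 2$, $n\ge 1$ and $\sigma>0$. For $z\in\mathbb{R}^M$ and $\theta\in\Theta$ let $Q(z,\theta)=\frac12\theta^\top\theta-z^\top\theta$. For $k=1,\dots,M$ let $P^k$ be the distribution of a Gaussian random vector $Z\in\mathbb{R}^M$ with mean $e_k\frac{\sigma}{2}\sqrt{(\log M)/n}$ and covariance matrix $\sigma^2 I$, and let $A_k(\theta)=E^k[Q(Z,\theta)]$, where $E^k$ is expectation under $P^k$. Let $Z_1,\dots,Z_n$ be i.i.d. with the same distribution as $Z$, and let $E_n^k$ denote expectation with respect to $(Z_1,\dots,Z_n)$ when $Z\sim P^k$. Then there exists an absolute constant $c>0$ (not depending on $M,n,\sigma$) such that $$\inf_{T_n}\ \sup_{k=1,\dots,M}\Big\{E_n^k[A_k(T_n)]-\min_{1\le j\le M}A_k(e_j)\Big\}\ \ge\ c\,\sigma\sqrt{\frac{\log M}{n}},$$ where the infimum is over all selectors $T_n$.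
   Context: $\Theta=\{\theta\in\mathbb{R}^M:\sum_{j=1}^M\theta^{(j)}=1,\ \theta^{(j)}\ge 0\}$ is the simplex, and $e_j$ is the $j$th coordinate unit vector of $\mathbb{R}^M$. A selector is any estimator $T_n$ that is a measurable function of the sample $(Z_1,\dots,Z_n)$ and takes values in $\{e_1,\dots,e_M\}$. $I$ is the $M\times M$ identity matrix. *)

theory Defs
  imports "HOL-Probability.Probability"
begin

text \<open>Vectors of R^M are functions nat => real, coordinates indexed by 0..<M.\<close>

definition unitv :: "nat \<Rightarrow> nat \<Rightarrow> real" where
  "unitv j = (\<lambda>i. if i = j then 1 else 0)"

definition Qloss :: "nat \<Rightarrow> (nat \<Rightarrow> real) \<Rightarrow> (nat \<Rightarrow> real) \<Rightarrow> real" where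
  "Qloss M z \<theta> = (\<Sum>i<M. (\<theta> i)\<^sup>2) / 2 - (\<Sum>i<M. z i * \<theta> i)"

definition gauss_vec :: "nat \<Rightarrow> (nat \<Rightarrow> real) \<Rightarrow> real \<Rightarrow> (nat \<Rightarrow> real) measure" where
  "gauss_vec M \<mu> \<sigma> = PiM {..<M} (\<lambda>i. density lborel (normal_density (\<mu> i) \<sigma>))"

definition lb_mean :: "nat \<Rightarrow> nat \<Rightarrow> real \<Rightarrow> nat \<Rightarrow> nat \<Rightarrow> real" where
  "lb_mean M n \<sigma> k = (\<lambda>i. unitv k i * (\<sigma> / 2) * sqrt (ln (real M) / real n))"

definition Pk :: "nat \<Rightarrow> nat \<Rightarrow> real \<Rightarrow> nat \<Rightarrow> (nat \<Rightarrow> real) measure" where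
  "Pk M n \<sigma> k = gauss_vec M (lb_mean M n \<sigma> k) \<sigma>"

definition Ak :: "nat \<Rightarrow> nat \<Rightarrow> real \<Rightarrow> nat \<Rightarrow> (nat \<Rightarrow> real) \<Rightarrow> real" where
  "Ak M n \<sigma> k \<theta> = (\<integral>z. Qloss M z \<theta> \<partial>Pk M n \<sigma> k)"

definition sample :: "nat \<Rightarrow> nat \<Rightarrow> real \<Rightarrow> nat \<Rightarrow> (nat \<Rightarrow> nat \<Rightarrow> real) measure" where
  "sample M n \<sigma> k = PiM {..<n} (\<lambda>_. Pk M n \<sigma> k)"

definition selector :: "nat \<Rightarrow> nat \<Rightarrow> ((nat \<Rightarrow> nat \<Rightarrow> real) \<Rightarrow> (nat \<Rightarrow> real)) \<Rightarrow> bool" where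
  "selector M n T \<longleftrightarrow>
     T \<in> measurable (PiM {..<n} (\<lambda>_. PiM {..<M} (\<lambda>_. lborel))) (count_space (unitv ` {..<M}))"

end

theory Submission
  imports Defs
begin

(*
  Write delta = sigma/2 * sqrt (ln M / n) and p_k = P^k (T = e_k). Since A_k (e_j) = 1/2 - delta [j = k],
  the excess risk of a selector T under P^k is delta (1 - p_k), so it suffices that p_k <= 4/5 for
  some k. The density f_k of the sample under P^k satisfies f_k^2 = f_0 g_k M^(1/4), where g_k is the
  sample density for the doubled mean and M^(1/4) = exp (n |mu_k|^2 / sigma^2) is the chi-square factor
  of the perturbation. Pointwise AM-GM gives f_k <= M/2 f_0 + M^(1/4)/(2M) g_k, and integrating over
  the disjoint events {T = e_k} yields sum_k p_k <= (M + M^(1/4))/2 <= 4/5 M.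
*)

lemma indicator_PiE_eq_prod:
  assumes "finite I" "x \<in> extensional I"
  shows "(indicator (Pi\<^sub>E I A) x :: ennreal) = (\<Prod>i\<in>I. indicator (A i) (x i))"
proof (cases "\<forall>i\<in>I. x i \<in> A i")
  case True
  then show ?thesis using assms by (auto simp: indicator_def PiE_def)
next
  case False
  then obtain i where "i \<in> I" "x i \<notin> A i" by auto
  then show ?thesis using assms by (auto simp: indicator_def PiE_def intro!: prod_zero)
qed

lemma PiM_density:
  fixes f :: "'i \<Rightarrow> 'a \<Rightarrow> ennreal"
  assumes fin: "finite I" and sf: "\<And>i. sigma_finite_measure (N i)"
    and sf_density: "\<And>i. sigma_finite_measure (density (N i) (f i))"
    and meas: "\<And>i. f i \<in> borel_measurable (N i)"
  shows "PiM I (\<lambda>i. density (N i) (f i)) = density (PiM I N) (\<lambda>x. \<Prod>i\<in>I. f i (x i))"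
proof -
  interpret D: product_sigma_finite "\<lambda>i. density (N i) (f i)"
    by (simp add: product_sigma_finite_def sf_density)
  interpret P: product_sigma_finite N
    by (simp add: product_sigma_finite_def sf)
  have [measurable]: "(\<lambda>x. \<Prod>i\<in>I. f i (x i)) \<in> borel_measurable (PiM I N)"
    using meas by measurable
  show ?thesis
  proof (rule D.PiM_eqI[symmetric, OF fin])
    show "sets (density (PiM I N) (\<lambda>x. \<Prod>i\<in>I. f i (x i))) = sets (PiM I (\<lambda>i. density (N i) (f i)))"
      by (simp, intro sets_PiM_cong) auto
    fix A assume "\<And>i. i \<in> I \<Longrightarrow> A i \<in> sets (density (N i) (f i))"
    then have A: "\<And>i. i \<in> I \<Longrightarrow> A i \<in> sets (N i)" by simp
    then have "Pi\<^sub>E I A \<in> sets (PiM I N)"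
      by (rule sets_PiM_I_finite[OF fin])
    then have "emeasure (density (PiM I N) (\<lambda>x. \<Prod>i\<in>I. f i (x i))) (Pi\<^sub>E I A)
        = (\<integral>\<^sup>+x. (\<Prod>i\<in>I. f i (x i)) * indicator (Pi\<^sub>E I A) x \<partial>PiM I N)"
      by (rule emeasure_density[rotated]) simp
    also have "\<dots> = (\<integral>\<^sup>+x. (\<Prod>i\<in>I. f i (x i) * indicator (A i) (x i)) \<partial>PiM I N)"
    proof (intro nn_integral_cong)
      fix x assume "x \<in> space (PiM I N)"
      then have "x \<in> extensional I" by (simp add: space_PiM PiE_def)
      then show "(\<Prod>i\<in>I. f i (x i)) * indicator (Pi\<^sub>E I A) x = (\<Prod>i\<in>I. f i (x i) * indicator (A i) (x i))"
        by (simp add: indicator_PiE_eq_prod[OF fin] prod.distrib)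
    qed
    also have "\<dots> = (\<Prod>i\<in>I. \<integral>\<^sup>+x. f i x * indicator (A i) x \<partial>N i)"
      using A meas by (intro P.product_nn_integral_prod fin) auto
    also have "\<dots> = (\<Prod>i\<in>I. emeasure (density (N i) (f i)) (A i))"
      using A meas by (intro prod.cong refl emeasure_density[symmetric]) auto
    finally show "emeasure (density (PiM I N) (\<lambda>x. \<Prod>i\<in>I. f i (x i))) (Pi\<^sub>E I A)
        = (\<Prod>i\<in>I. emeasure (density (N i) (f i)) (A i))" .
  qed
qed

lemma four_mult_le_square_sum: "4 * u * v \<le> (u + v)\<^sup>2" for u v :: real
  using zero_le_power2[of "u - v"] by (simp add: power2_eq_square algebra_simps)

lemma sum_set_nn_integral_disjoint_le_AM_GM:
  fixes f h :: "'i \<Rightarrow> 'a \<Rightarrow> real" and g :: "'a \<Rightarrow> real" and a C :: real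
  assumes K: "finite K" and A: "disjoint_family_on A K" "\<And>k. k \<in> K \<Longrightarrow> A k \<in> sets N"
    and [measurable]: "\<And>k. k \<in> K \<Longrightarrow> f k \<in> borel_measurable N" "g \<in> borel_measurable N" "\<And>k. k \<in> K \<Longrightarrow> h k \<in> borel_measurable N"
    and nonneg: "\<And>x. 0 \<le> g x" "\<And>k x. 0 \<le> h k x"
    and sq: "\<And>k x. k \<in> K \<Longrightarrow> x \<in> space N \<Longrightarrow> (f k x)\<^sup>2 \<le> C * g x * h k x"
    and g1: "(\<integral>\<^sup>+x. g x \<partial>N) \<le> 1" and h1: "\<And>k. k \<in> K \<Longrightarrow> (\<integral>\<^sup>+x. h k x \<partial>N) \<le> 1"
    and a: "0 < a" and C: "0 \<le> C"
  shows "(\<Sum>k\<in>K. \<integral>\<^sup>+x. ennreal (f k x) * indicator (A k) x \<partial>N) \<le> ennreal (a / 2 + card K * C / (2 * a))"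
proof -
  have am_gm: "f k x \<le> a / 2 * g x + C / (2 * a) * h k x" if "k \<in> K" "x \<in> space N" for k x
  proof -
    have "4 * (a / 2 * g x) * (C / (2 * a) * h k x) = C * g x * h k x"
      using a by (simp add: field_simps)
    then have "(f k x)\<^sup>2 \<le> (a / 2 * g x + C / (2 * a) * h k x)\<^sup>2"
      using sq[OF that] four_mult_le_square_sum[of "a / 2 * g x" "C / (2 * a) * h k x"] by linarith
    moreover have "0 \<le> a / 2 * g x + C / (2 * a) * h k x"
      using a C nonneg by simp
    ultimately show ?thesis
      by (rule power2_le_imp_le)
  qed
  have pointwise: "(\<Sum>k\<in>K. ennreal (f k x) * indicator (A k) x)
      \<le> ennreal (a / 2) * g x + (\<Sum>k\<in>K. ennreal (C / (2 * a)) * h k x)" if x: "x \<in> space N" for x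
  proof -
    have "(\<Sum>k\<in>K. ennreal (f k x) * indicator (A k) x)
        \<le> (\<Sum>k\<in>K. ennreal (a / 2) * g x * indicator (A k) x + ennreal (C / (2 * a)) * h k x)"
    proof (intro sum_mono)
      fix k assume k: "k \<in> K"
      have "ennreal (f k x) \<le> ennreal (a / 2 * g x + C / (2 * a) * h k x)"
        using am_gm[OF k x] by (rule ennreal_leI)
      also have "\<dots> = ennreal (a / 2) * g x + ennreal (C / (2 * a)) * h k x"
        using a C nonneg by (simp add: ennreal_mult[symmetric])
      finally have "ennreal (f k x) \<le> ennreal (a / 2) * g x + ennreal (C / (2 * a)) * h k x" .
      then show "ennreal (f k x) * indicator (A k) x
          \<le> ennreal (a / 2) * g x * indicator (A k) x + ennreal (C / (2 * a)) * h k x"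
        by (auto simp: indicator_def)
    qed
    also have "\<dots> = ennreal (a / 2) * g x * indicator (\<Union>k\<in>K. A k) x + (\<Sum>k\<in>K. ennreal (C / (2 * a)) * h k x)"
      by (simp add: sum.distrib indicator_UN_disjoint[OF K A(1)] sum_distrib_left)
    also have "\<dots> \<le> ennreal (a / 2) * g x + (\<Sum>k\<in>K. ennreal (C / (2 * a)) * h k x)"
      by (intro add_right_mono) (auto simp: indicator_def)
    finally show ?thesis .
  qed
  have "(\<Sum>k\<in>K. \<integral>\<^sup>+x. ennreal (f k x) * indicator (A k) x \<partial>N) = (\<integral>\<^sup>+x. (\<Sum>k\<in>K. ennreal (f k x) * indicator (A k) x) \<partial>N)"
    using A(2) by (intro nn_integral_sum[symmetric]) auto
  also have "\<dots> \<le> (\<integral>\<^sup>+x. ennreal (a / 2) * g x + (\<Sum>k\<in>K. ennreal (C / (2 * a)) * h k x) \<partial>N)"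
    using pointwise by (intro nn_integral_mono)
  also have "\<dots> = ennreal (a / 2) * (\<integral>\<^sup>+x. g x \<partial>N) + (\<Sum>k\<in>K. ennreal (C / (2 * a)) * (\<integral>\<^sup>+x. h k x \<partial>N))"
    by (simp add: nn_integral_add nn_integral_sum nn_integral_cmult)
  also have "\<dots> \<le> ennreal (a / 2) * 1 + (\<Sum>k\<in>K. ennreal (C / (2 * a)) * 1)"
    using g1 h1 by (intro add_mono mult_left_mono sum_mono) auto
  also have "\<dots> = ennreal (a / 2 + card K * C / (2 * a))"
    using a C by (simp add: ennreal_of_nat_eq_real_of_nat ennreal_mult[symmetric])
  finally show ?thesis .
qed

lemma powr_quarter_le:
  fixes x :: real
  assumes "2 \<le> x"
  shows "x powr (1/4) \<le> 3/5 * x"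
proof -
  define u where "u = x powr (1/4)"
  have u: "0 < u" "u ^ 4 = x"
    using assms by (simp_all add: u_def powr_realpow[symmetric] powr_powr)
  have "(u ^ 3) ^ 4 = x ^ 3"
    using u(2) by (metis power_mult mult.commute)
  moreover have "(2::real) ^ 3 \<le> x ^ 3"
    using assms by (intro power_mono) auto
  ultimately have "(5/3) ^ 4 < (u ^ 3) ^ 4"
    by (simp add: eval_nat_numeral)
  then have "5/3 < u ^ 3"
    by (rule power_less_imp_less_base) (use u(1) in simp)
  then have "5/3 * u \<le> u ^ 3 * u"
    using u(1) by (intro mult_right_mono) auto
  also have "\<dots> = x"
    using u(2) by (simp add: eval_nat_numeral algebra_simps)
  finally show ?thesis
    unfolding u_def by linarith
qed

abbreviation lborel_vec :: "nat \<Rightarrow> (nat \<Rightarrow> real) measure" where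
  "lborel_vec M \<equiv> PiM {..<M} (\<lambda>_. lborel)"

abbreviation lborel_sample :: "nat \<Rightarrow> nat \<Rightarrow> (nat \<Rightarrow> nat \<Rightarrow> real) measure" where
  "lborel_sample M n \<equiv> PiM {..<n} (\<lambda>_. lborel_vec M)"

definition iid_gauss_density :: "nat \<Rightarrow> nat \<Rightarrow> real \<Rightarrow> (nat \<Rightarrow> real) \<Rightarrow> (nat \<Rightarrow> nat \<Rightarrow> real) \<Rightarrow> real" where
  "iid_gauss_density M n \<sigma> \<mu> \<omega> = (\<Prod>j<n. \<Prod>i<M. normal_density (\<mu> i) \<sigma> (\<omega> j i))"

lemma prob_space_gauss_vec: "0 < \<sigma> \<Longrightarrow> prob_space (gauss_vec M \<mu> \<sigma>)"
  unfolding gauss_vec_def by (intro prob_space_PiM prob_space_normal_density)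

lemma prob_space_PiM_gauss_vec: "0 < \<sigma> \<Longrightarrow> prob_space (PiM {..<n} (\<lambda>_. gauss_vec M \<mu> \<sigma>))"
  by (intro prob_space_PiM prob_space_gauss_vec)

lemma sigma_finite_lborel_vec: "sigma_finite_measure (lborel_vec M)"
proof -
  interpret product_sigma_finite "\<lambda>_. lborel :: real measure"
    by (simp add: product_sigma_finite_def lborel.sigma_finite_measure_axioms)
  show ?thesis by (rule sigma_finite) simp
qed

lemma gauss_vec_eq_density:
  assumes "0 < \<sigma>"
  shows "gauss_vec M \<mu> \<sigma> = density (lborel_vec M) (\<lambda>z. \<Prod>i<M. normal_density (\<mu> i) \<sigma> (z i))"
proof -
  have "gauss_vec M \<mu> \<sigma> = density (lborel_vec M) (\<lambda>z. \<Prod>i<M. ennreal (normal_density (\<mu> i) \<sigma> (z i)))"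
    unfolding gauss_vec_def
    by (rule PiM_density) (auto simp: lborel.sigma_finite_measure_axioms
        intro: prob_space_imp_sigma_finite prob_space_normal_density assms)
  then show ?thesis by (simp add: prod_ennreal)
qed

lemma PiM_gauss_vec_eq_density:
  assumes "0 < \<sigma>"
  shows "PiM {..<n} (\<lambda>_. gauss_vec M \<mu> \<sigma>) = density (lborel_sample M n) (iid_gauss_density M n \<sigma> \<mu>)"
proof -
  have "PiM {..<n} (\<lambda>_. gauss_vec M \<mu> \<sigma>)
      = density (lborel_sample M n) (\<lambda>\<omega>. \<Prod>j<n. ennreal (\<Prod>i<M. normal_density (\<mu> i) \<sigma> (\<omega> j i)))"
    unfolding gauss_vec_eq_density[OF assms]
    by (rule PiM_density) (auto simp: sigma_finite_lborel_vec gauss_vec_eq_density[OF assms, symmetric]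
        intro: prob_space_imp_sigma_finite prob_space_gauss_vec assms)
  then show ?thesis
    by (simp add: iid_gauss_density_def prod_ennreal prod_nonneg)
qed

lemma borel_measurable_component_component:
  assumes "j \<in> J" "i \<in> I"
  shows "(\<lambda>x. x j i :: real) \<in> borel_measurable (PiM J (\<lambda>_. PiM I (\<lambda>_. lborel)))"
  using measurable_compose[OF measurable_component_singleton[OF assms(1)]
      measurable_component_singleton[OF assms(2), where M="\<lambda>_. lborel"]]
  by simp

lemma borel_measurable_iid_gauss_density [measurable]:
  "iid_gauss_density M n \<sigma> \<mu> \<in> borel_measurable (lborel_sample M n)"
  unfolding iid_gauss_density_def
  by (intro borel_measurable_prod measurable_compose[OF borel_measurable_component_component borel_measurable_normal_density])
     auto

lemma iid_gauss_density_nonneg: "0 \<le> iid_gauss_density M n \<sigma> \<mu> \<omega>"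
  unfolding iid_gauss_density_def by (intro prod_nonneg) auto

lemma nn_integral_iid_gauss_density:
  assumes "0 < \<sigma>"
  shows "(\<integral>\<^sup>+\<omega>. iid_gauss_density M n \<sigma> \<mu> \<omega> \<partial>lborel_sample M n) = 1"
proof -
  interpret prob_space "density (lborel_sample M n) (iid_gauss_density M n \<sigma> \<mu>)"
    using prob_space_PiM_gauss_vec[OF assms, where n=n and M=M and \<mu>=\<mu>] by (simp add: PiM_gauss_vec_eq_density[OF assms])
  have "emeasure (density (lborel_sample M n) (iid_gauss_density M n \<sigma> \<mu>)) (space (lborel_sample M n))
      = (\<integral>\<^sup>+\<omega>. iid_gauss_density M n \<sigma> \<mu> \<omega> \<partial>lborel_sample M n)"
    by (subst emeasure_density) (auto intro!: nn_integral_cong)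
  then show ?thesis
    using emeasure_space_1 by simp
qed

lemma normal_density_squared:
  assumes "0 < \<sigma>"
  shows "(normal_density \<mu> \<sigma> x)\<^sup>2 = normal_density 0 \<sigma> x * normal_density (2 * \<mu>) \<sigma> x * exp (\<mu>\<^sup>2 / \<sigma>\<^sup>2)"
proof -
  have "2 * (- (x - \<mu>)\<^sup>2 / (2 * \<sigma>\<^sup>2)) = - (x - 0)\<^sup>2 / (2 * \<sigma>\<^sup>2) + - (x - 2 * \<mu>)\<^sup>2 / (2 * \<sigma>\<^sup>2) + \<mu>\<^sup>2 / \<sigma>\<^sup>2"
    using assms by (simp add: field_simps power2_eq_square)
  then have "(exp (- (x - \<mu>)\<^sup>2 / (2 * \<sigma>\<^sup>2)))\<^sup>2
      = exp (- (x - 0)\<^sup>2 / (2 * \<sigma>\<^sup>2)) * exp (- (x - 2 * \<mu>)\<^sup>2 / (2 * \<sigma>\<^sup>2)) * exp (\<mu>\<^sup>2 / \<sigma>\<^sup>2)"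
    by (simp add: exp_add[symmetric] power2_eq_square)
  then show ?thesis
    unfolding normal_density_def by (simp add: power_mult_distrib power2_eq_square)
qed

lemma iid_gauss_density_squared:
  assumes "0 < \<sigma>"
  shows "(iid_gauss_density M n \<sigma> \<mu> \<omega>)\<^sup>2
    = iid_gauss_density M n \<sigma> (\<lambda>_. 0) \<omega> * iid_gauss_density M n \<sigma> (\<lambda>i. 2 * \<mu> i) \<omega>
      * exp (real n * (\<Sum>i<M. (\<mu> i)\<^sup>2) / \<sigma>\<^sup>2)"
proof -
  have "(iid_gauss_density M n \<sigma> \<mu> \<omega>)\<^sup>2
      = (\<Prod>j<n. \<Prod>i<M. normal_density 0 \<sigma> (\<omega> j i) * normal_density (2 * \<mu> i) \<sigma> (\<omega> j i) * exp ((\<mu> i)\<^sup>2 / \<sigma>\<^sup>2))"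
    unfolding iid_gauss_density_def by (simp add: prod_power_distrib normal_density_squared[OF assms])
  also have "\<dots> = iid_gauss_density M n \<sigma> (\<lambda>_. 0) \<omega> * iid_gauss_density M n \<sigma> (\<lambda>i. 2 * \<mu> i) \<omega>
      * exp ((\<Sum>i<M. (\<mu> i)\<^sup>2 / \<sigma>\<^sup>2)) ^ n"
    unfolding iid_gauss_density_def by (simp add: prod.distrib exp_sum)
  also have "exp ((\<Sum>i<M. (\<mu> i)\<^sup>2 / \<sigma>\<^sup>2)) ^ n = exp (real n * (\<Sum>i<M. (\<mu> i)\<^sup>2) / \<sigma>\<^sup>2)"
    by (simp add: exp_of_nat_mult[symmetric] sum_divide_distrib[symmetric])
  finally show ?thesis .
qed

lemma unitv_eq_iff [simp]: "unitv a = unitv b \<longleftrightarrow> a = b"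
proof
  assume "unitv a = unitv b"
  then have "unitv a a = unitv b a" by simp
  then show "a = b" by (simp add: unitv_def split: if_splits)
qed simp

lemma Qloss_unitv: "j < M \<Longrightarrow> Qloss M z (unitv j) = 1/2 - z j"
  by (simp add: Qloss_def unitv_def if_distrib[of "\<lambda>x. x\<^sup>2"] if_distrib[of "\<lambda>x. z _ * x"] cong: if_cong)

lemma integral_gauss_vec_component:
  assumes "0 < \<sigma>" "j < M"
  shows "integrable (gauss_vec M \<mu> \<sigma>) (\<lambda>z. z j)" "(\<integral>z. z j \<partial>gauss_vec M \<mu> \<sigma>) = \<mu> j"
proof -
  let ?N = "\<lambda>i. density lborel (\<lambda>x. ennreal (normal_density (\<mu> i) \<sigma> x))"
  interpret N: product_sigma_finite ?N
    by (simp add: product_sigma_finite_def prob_space_imp_sigma_finite[OF prob_space_normal_density] assms(1))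
  define f where "f i = (\<lambda>x::real. if i = j then x else 1)" for i
  have factor: "integrable (?N i) (f i) \<and> (\<integral>x. f i x \<partial>?N i) = (if i = j then \<mu> j else 1)" for i
  proof (cases "i = j")
    case True
    then show ?thesis
      using normal_moment_nz_1[OF assms(1), of "\<mu> i"]
      by (simp add: f_def integrable_density integral_density has_bochner_integral_iff normal_density_nonneg)
  next
    case False
    interpret prob_space "?N i"
      using prob_space_normal_density[OF assms(1)] .
    show ?thesis using False prob_space by (simp add: f_def)
  qed
  have component: "(\<lambda>z. z j) = (\<lambda>z. \<Prod>i<M. f i (z i))"
    using assms(2) by (simp add: f_def prod.If_cases Int_absorb1)
  show "integrable (gauss_vec M \<mu> \<sigma>) (\<lambda>z. z j)"
    unfolding gauss_vec_def component by (rule N.product_integrable_prod) (use factor in auto)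
  have "(\<integral>z. (\<Prod>i<M. f i (z i)) \<partial>PiM {..<M} ?N) = (\<Prod>i<M. if i = j then \<mu> j else 1)"
    using factor by (subst N.product_integral_prod) auto
  then show "(\<integral>z. z j \<partial>gauss_vec M \<mu> \<sigma>) = \<mu> j"
    unfolding gauss_vec_def component using assms(2) by simp
qed

lemma lb_mean_eq: "lb_mean M n \<sigma> k j = (if j = k then \<sigma> / 2 * sqrt (ln M / n) else 0)"
  by (simp add: lb_mean_def unitv_def)

lemma Ak_unitv:
  assumes "0 < \<sigma>" "j < M"
  shows "Ak M n \<sigma> k (unitv j) = 1/2 - lb_mean M n \<sigma> k j"
proof -
  interpret prob_space "gauss_vec M (lb_mean M n \<sigma> k) \<sigma>"
    by (rule prob_space_gauss_vec[OF assms(1)])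
  show ?thesis
    unfolding Ak_def Pk_def using integral_gauss_vec_component[OF assms] assms(2)
    by (simp add: Qloss_unitv prob_space)
qed

lemma sample_eq_density:
  "0 < \<sigma> \<Longrightarrow> sample M n \<sigma> k = density (lborel_sample M n) (iid_gauss_density M n \<sigma> (lb_mean M n \<sigma> k))"
  unfolding sample_def Pk_def by (rule PiM_gauss_vec_eq_density)

definition selector_event :: "nat \<Rightarrow> nat \<Rightarrow> ((nat \<Rightarrow> nat \<Rightarrow> real) \<Rightarrow> (nat \<Rightarrow> real)) \<Rightarrow> nat \<Rightarrow> (nat \<Rightarrow> nat \<Rightarrow> real) set" where
  "selector_event M n T k = {\<omega> \<in> space (lborel_sample M n). T \<omega> = unitv k}"

lemma selector_values:
  "selector M n T \<Longrightarrow> \<omega> \<in> space (lborel_sample M n) \<Longrightarrow> \<exists>j<M. T \<omega> = unitv j"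
  unfolding selector_def by (drule (1) measurable_space) auto

lemma sets_selector_event:
  assumes "selector M n T" "k < M"
  shows "selector_event M n T k \<in> sets (lborel_sample M n)"
proof -
  have "T -` {unitv k} \<inter> space (lborel_sample M n) \<in> sets (lborel_sample M n)"
    using assms unfolding selector_def by (intro measurable_sets) auto
  then show ?thesis
    by (simp add: selector_event_def vimage_def Int_def conj_commute)
qed

lemma selector_excess_risk:
  assumes \<sigma>: "0 < \<sigma>" and k: "k < M" and T: "selector M n T"
  shows "(\<integral>\<omega>. Ak M n \<sigma> k (T \<omega>) \<partial>sample M n \<sigma> k) - Min ((\<lambda>j. Ak M n \<sigma> k (unitv j)) ` {..<M})
    = \<sigma> / 2 * sqrt (ln M / n) * (1 - measure (sample M n \<sigma> k) (selector_event M n T k))"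
proof -
  define \<delta> where "\<delta> = \<sigma> / 2 * sqrt (ln M / n)"
  have "0 \<le> \<delta>"
    using \<sigma> k by (simp add: \<delta>_def)
  interpret prob_space "sample M n \<sigma> k"
    unfolding sample_def Pk_def by (rule prob_space_PiM_gauss_vec[OF \<sigma>])
  have space: "space (sample M n \<sigma> k) = space (lborel_sample M n)"
    by (simp add: sample_eq_density[OF \<sigma>])
  have event: "selector_event M n T k \<in> events"
    using sets_selector_event[OF T k] by (simp add: sample_eq_density[OF \<sigma>])
  have "(\<integral>\<omega>. Ak M n \<sigma> k (T \<omega>) \<partial>sample M n \<sigma> k)
      = (\<integral>\<omega>. 1/2 - \<delta> * indicator (selector_event M n T k) \<omega> \<partial>sample M n \<sigma> k)"
  proof (rule Bochner_Integration.integral_cong[OF refl])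
    fix \<omega> assume "\<omega> \<in> space (sample M n \<sigma> k)"
    then show "Ak M n \<sigma> k (T \<omega>) = 1/2 - \<delta> * indicator (selector_event M n T k) \<omega>"
      using selector_values[OF T, of \<omega>]
      by (auto simp: space Ak_unitv[OF \<sigma>] lb_mean_eq \<delta>_def selector_event_def)
  qed
  also have "\<dots> = 1/2 - \<delta> * prob (selector_event M n T k)"
    using event integrable_real_indicator[OF event]
    by (subst Bochner_Integration.integral_diff) (auto simp: prob_space emeasure_eq_measure)
  finally have "(\<integral>\<omega>. Ak M n \<sigma> k (T \<omega>) \<partial>sample M n \<sigma> k) = 1/2 - \<delta> * prob (selector_event M n T k)" .
  moreover have "Min ((\<lambda>j. Ak M n \<sigma> k (unitv j)) ` {..<M}) = 1/2 - \<delta>"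
    using k \<open>0 \<le> \<delta>\<close> by (intro Min_eqI) (auto simp: Ak_unitv[OF \<sigma>] lb_mean_eq \<delta>_def)
  ultimately show ?thesis
    by (simp add: \<delta>_def algebra_simps)
qed

lemma chi_square_factor_lb_mean:
  assumes "k < M" "1 \<le> n" "0 < \<sigma>"
  shows "exp (real n * (\<Sum>i<M. (lb_mean M n \<sigma> k i)\<^sup>2) / \<sigma>\<^sup>2) = real M powr (1/4)"
proof -
  have "(\<Sum>i<M. (lb_mean M n \<sigma> k i)\<^sup>2) = \<sigma>\<^sup>2 / 4 * (ln M / n)"
    using assms by (simp add: lb_mean_eq if_distrib[of "\<lambda>x. x\<^sup>2"] power_mult_distrib power_divide cong: if_cong)
  then show ?thesis
    using assms by (simp add: powr_def)
qed

lemma sum_prob_selector_event_le: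
  assumes M: "2 \<le> M" and n: "1 \<le> n" and \<sigma>: "0 < \<sigma>" and T: "selector M n T"
  shows "(\<Sum>k<M. measure (sample M n \<sigma> k) (selector_event M n T k)) \<le> 4/5 * M"
proof -
  let ?N = "lborel_sample M n"
  let ?f = "\<lambda>k. iid_gauss_density M n \<sigma> (lb_mean M n \<sigma> k)"
  let ?p = "\<lambda>k. measure (sample M n \<sigma> k) (selector_event M n T k)"
  have hit: "ennreal (?p k) = (\<integral>\<^sup>+\<omega>. ennreal (?f k \<omega>) * indicator (selector_event M n T k) \<omega> \<partial>?N)"
    if "k < M" for k
  proof -
    interpret prob_space "sample M n \<sigma> k"
      unfolding sample_def Pk_def by (rule prob_space_PiM_gauss_vec[OF \<sigma>])
    have "ennreal (?p k) = emeasure (sample M n \<sigma> k) (selector_event M n T k)"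
      by (simp add: emeasure_eq_measure)
    then show ?thesis
      using sets_selector_event[OF T that] by (simp add: sample_eq_density[OF \<sigma>] emeasure_density)
  qed
  have "ennreal (\<Sum>k<M. ?p k) = (\<Sum>k<M. \<integral>\<^sup>+\<omega>. ennreal (?f k \<omega>) * indicator (selector_event M n T k) \<omega> \<partial>?N)"
    by (simp add: sum_ennreal[symmetric] hit del: sum_ennreal)
  also have "\<dots> \<le> ennreal (real M / 2 + card {..<M} * M powr (1/4) / (2 * real M))"
  proof (rule sum_set_nn_integral_disjoint_le_AM_GM)
    show "disjoint_family_on (selector_event M n T) {..<M}"
      by (auto simp: disjoint_family_on_def selector_event_def)
    show "(?f k \<omega>)\<^sup>2 \<le> M powr (1/4) * iid_gauss_density M n \<sigma> (\<lambda>_. 0) \<omega>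
        * iid_gauss_density M n \<sigma> (\<lambda>i. 2 * lb_mean M n \<sigma> k i) \<omega>" if "k \<in> {..<M}" for k \<omega>
      using that by (simp add: iid_gauss_density_squared[OF \<sigma>] chi_square_factor_lb_mean[OF _ n \<sigma>] mult_ac)
  qed (use M \<sigma> sets_selector_event[OF T] in \<open>auto simp: iid_gauss_density_nonneg nn_integral_iid_gauss_density\<close>)
  also have "\<dots> = ennreal (M / 2 + M powr (1/4) / 2)"
    using M by simp
  finally have "(\<Sum>k<M. ?p k) \<le> M / 2 + M powr (1/4) / 2"
    by (subst (asm) ennreal_le_iff) auto
  then show ?thesis
    using powr_quarter_le[of M] M by simp
qed

theorem proposition2p1:
  "\<exists>c>0. \<forall>M n (\<sigma>::real). M \<ge> 2 \<longrightarrow> n \<ge> 1 \<longrightarrow> \<sigma> > 0 \<longrightarrow>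
     (\<forall>T. selector M n T \<longrightarrow>
        Max ((\<lambda>k. (\<integral>\<omega>. Ak M n \<sigma> k (T \<omega>) \<partial>sample M n \<sigma> k)
                   - Min ((\<lambda>j. Ak M n \<sigma> k (unitv j)) ` {..<M})) ` {..<M})
        \<ge> c * \<sigma> * sqrt (ln (real M) / real n))"
proof (intro exI[of _ "1/10"] conjI allI impI)
  fix M n T and \<sigma> :: real
  assume M: "M \<ge> 2" and n: "n \<ge> 1" and \<sigma>: "\<sigma> > 0" and T: "selector M n T"
  let ?p = "\<lambda>k. measure (sample M n \<sigma> k) (selector_event M n T k)"
  let ?risk = "\<lambda>k. (\<integral>\<omega>. Ak M n \<sigma> k (T \<omega>) \<partial>sample M n \<sigma> k) - Min ((\<lambda>j. Ak M n \<sigma> k (unitv j)) ` {..<M})"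
  have "\<exists>k<M. ?p k \<le> 4/5"
  proof (rule ccontr)
    assume "\<not> ?thesis"
    then have "(\<Sum>k<M. 4/5) < (\<Sum>k<M. ?p k)"
      using M by (intro sum_strict_mono) (auto simp: not_le lessThan_empty_iff)
    then show False
      using sum_prob_selector_event_le[OF M n \<sigma> T] by simp
  qed
  then obtain k where k: "k < M" "?p k \<le> 4/5"
    by blast
  have "1/10 * \<sigma> * sqrt (ln M / n) = \<sigma> / 2 * sqrt (ln M / n) * (1/5)"
    by simp
  also have "\<dots> \<le> \<sigma> / 2 * sqrt (ln M / n) * (1 - ?p k)"
    using k \<sigma> M by (intro mult_left_mono) auto
  also have "\<dots> = ?risk k"
    by (rule selector_excess_risk[OF \<sigma> k(1) T, symmetric])
  also have "\<dots> \<le> Max (?risk ` {..<M})"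
    using k by (intro Max_ge) auto
  finally show "1/10 * \<sigma> * sqrt (ln M / n) \<le> Max (?risk ` {..<M})" .
qed simp

end
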